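(* Let $L\ge2$, $N\ge d_x$, and assume $X_\epsilon$ has rank $d_x$, $p\ge\mathrm{rank}\big(YX_\epsilon^T(X_\epsilon X_\epsilon^T)^{-1}\big)$, and the teacher interpolates the clean data: $\tilde W_{L:1}X=Y$. Then every global minimizer $(W_L^{base},\dots,W_1^{base})$ of $\mathcal L_{base}$ and every global minimizer $(W_L^{st},\dots,W_1^{st})$ of $\mathcal L_{st}$ satisfy $$W_{L:1}^{base}=W_{L:1}^{st}=YX_\epsilon^T(X_\epsilon X_\epsilon^T)^{-1}.$$
   Context: Clean inputs $x_i\in\mathbb R^{d_x}$, targets $y_i\in\mathbb R^{d_y}$, noise $\epsilon_i\in\mathbb R^{d_x}$, $i=1,\dots,N$; $X\in\mathbb R^{d_x\times N}$ has columns $x_i$, $X_\epsilon$ has columns $x_i+\epsilon_i$, $Y\in\mathbb R^{d_y\times N}$ has columns $y_i$. A deep linear network with $L$ layers is a tuple $(W_L,\dots,W_1)$ with $W_i\in\mathbb R^{d_i\times d_{i-1}}$, $d_0=d_x$, $d_L=d_y$; $W_{i:j}:=W_iW_{i-1}\cdots W_j$; $p:=\min_{0\le i\le L}d_i$. Base loss: $\mathcal L_{base}(W_L,\dots,W_1)=\|W_{L:1}X_\epsilon-Y\|_F^2$. Fix $i^*\in\{1,\dots,L\}$, $\lambda>0$ and teacher weights $(\tilde W_L,\dots,\tilde W_1)$ of the same shapes; the student–teacher loss is $\mathcal L_{st}(W_L,\dots,W_1)=\|W_{L:1}X_\epsilon-Y\|_F^2+\lambda\|W_{i^*:1}X_\epsilon-\tilde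 W_{i^*:1}X\|_F^2$. *)

theory Defs
  imports "Jordan_Normal_Form.DL_Rank" "Jordan_Normal_Form.Gauss_Jordan_Elimination"
begin

text \<open>A deep linear network with dimension list ds = [d_0, ..., d_L] is a list
  Ws = [W_1, ..., W_L] with Ws ! (i-1) = W_i of size d_i x d_(i-1).\<close>

definition net_shape :: "nat list \<Rightarrow> real mat list \<Rightarrow> bool" where
  "net_shape ds Ws \<longleftrightarrow> length ds = length Ws + 1 \<and>
     (\<forall>i < length Ws. Ws ! i \<in> carrier_mat (ds ! (Suc i)) (ds ! i))"

fun prod_net :: "nat \<Rightarrow> real mat list \<Rightarrow> nat \<Rightarrow> real mat" where
  "prod_net d0 Ws 0 = 1\<^sub>m d0"
| "prod_net d0 Ws (Suc k) = Ws ! k * prod_net d0 Ws k"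

definition frob_sq :: "real mat \<Rightarrow> real" where
  "frob_sq A = (\<Sum>i<dim_row A. \<Sum>j<dim_col A. (A $$ (i, j))^2)"

definition mrank :: "real mat \<Rightarrow> nat" where
  "mrank A = vec_space.rank (dim_row A) A"

definition minv :: "real mat \<Rightarrow> real mat" where
  "minv A = the (mat_inverse A)"

definition loss_base :: "real mat \<Rightarrow> real mat \<Rightarrow> real mat list \<Rightarrow> real" where
  "loss_base Xe Y Ws = frob_sq (prod_net (dim_row Xe) Ws (length Ws) * Xe - Y)"

definition loss_st :: "real mat \<Rightarrow> real mat \<Rightarrow> real mat \<Rightarrow> real mat list \<Rightarrow> nat \<Rightarrow> real
     \<Rightarrow> real mat list \<Rightarrow> real" where
  "loss_st X Xe Y Wt istar lam Ws =
     frob_sq (prod_net (dim_row Xe) Ws (length Ws) * Xe - Y)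
     + lam * frob_sq (prod_net (dim_row Xe) Ws istar * Xe - prod_net (dim_row X) Wt istar * X)"

end

theory Submission imports Defs begin

text \<open>Both losses are bounded below by least-squares problems: the base loss by
  \<open>\<parallel>W Xe - Y\<parallel>\<^sup>2\<close>, the second summand of the student-teacher loss by
  \<open>\<parallel>W Xe - W\<^sub>t X\<parallel>\<^sup>2\<close> with \<open>W\<^sub>t\<close> the teacher's first \<open>i*\<close> layers. Since \<open>Xe\<close> has full
  row rank, each least-squares problem has the unique solution \<open>C Xe\<^sup>T (Xe Xe\<^sup>T)\<^sup>-\<^sup>1\<close>.
  Multiplying the teacher's first layer by \<open>G = X Xe\<^sup>T (Xe Xe\<^sup>T)\<^sup>-\<^sup>1\<close> turns every partial
  product \<open>P\<close> of the teacher into \<open>P G\<close>, the least-squares solution for \<open>C = P X\<close>;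
  as the teacher interpolates, \<open>P X = Y\<close> for the full product. This network attains
  all lower bounds at once, so every minimiser of either loss attains the bound for
  \<open>Y\<close>, and uniqueness pins down its end-to-end matrix.\<close>

definition frob_inner :: "real mat \<Rightarrow> real mat \<Rightarrow> real" where
  "frob_inner A B = (\<Sum>i<dim_row A. \<Sum>j<dim_col A. A $$ (i, j) * B $$ (i, j))"

lemma frob_sq_nonneg: "frob_sq A \<ge> 0"
  unfolding frob_sq_def by (intro sum_nonneg) auto

lemma frob_sq_eq_0_iff:
  assumes A: "A \<in> carrier_mat r c"
  shows "frob_sq A = 0 \<longleftrightarrow> A = 0\<^sub>m r c"
proof
  assume z: "frob_sq A = 0"
  show "A = 0\<^sub>m r c"
  proof (rule eq_matI)
    fix i j assume ij: "i < dim_row (0\<^sub>m r c :: real mat)" "j < dim_col (0\<^sub>m r c :: real mat)"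
    have "(\<Sum>j<c. (A $$ (i, j))\<^sup>2) = 0"
      using z A ij unfolding frob_sq_def
      by (subst (asm) sum_nonneg_eq_0_iff) (auto intro!: sum_nonneg)
    then have "(A $$ (i, j))\<^sup>2 = 0"
      using ij by (subst (asm) sum_nonneg_eq_0_iff) auto
    then show "A $$ (i, j) = 0\<^sub>m r c $$ (i, j)" using ij by simp
  qed (use A in auto)
qed (simp add: frob_sq_def)

lemma frob_sq_add:
  assumes A: "A \<in> carrier_mat r c" and B: "B \<in> carrier_mat r c"
  shows "frob_sq (A + B) = frob_sq A + 2 * frob_inner A B + frob_sq B"
proof -
  have "frob_sq (A + B) = (\<Sum>i<r. \<Sum>j<c. (A $$ (i, j))\<^sup>2 + 2 * (A $$ (i, j) * B $$ (i, j)) + (B $$ (i, j))\<^sup>2)"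
    unfolding frob_sq_def using A B
    by (auto intro!: sum.cong simp: power2_eq_square algebra_simps)
  then show ?thesis
    unfolding frob_sq_def frob_inner_def using A B by (simp add: sum.distrib sum_distrib_left)
qed

lemma frob_inner_mult_left:
  fixes D X R :: "real mat"
  assumes D: "D \<in> carrier_mat r n" and X: "X \<in> carrier_mat n N" and R: "R \<in> carrier_mat r N"
  shows "frob_inner (D * X) R = frob_inner D (R * transpose_mat X)"
proof -
  have DX: "(D * X) $$ (i, j) = (\<Sum>k<n. D $$ (i, k) * X $$ (k, j))" if "i < r" "j < N" for i j
    using D X that by (auto simp: scalar_prod_def lessThan_atLeast0 intro!: sum.cong)
  have RXT: "(R * transpose_mat X) $$ (i, k) = (\<Sum>j<N. R $$ (i, j) * X $$ (k, j))" if "i < r" "k < n" for i k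
    using R X that by (auto simp: scalar_prod_def lessThan_atLeast0)
  have "frob_inner (D * X) R = (\<Sum>i<r. \<Sum>j<N. \<Sum>k<n. D $$ (i, k) * (R $$ (i, j) * X $$ (k, j)))"
    unfolding frob_inner_def using D X
    by (auto simp: DX sum_distrib_left mult.left_commute mult.commute intro!: sum.cong
        simp del: index_mult_mat(1))
  also have "\<dots> = (\<Sum>i<r. \<Sum>k<n. D $$ (i, k) * (\<Sum>j<N. R $$ (i, j) * X $$ (k, j)))"
    by (auto simp: sum_distrib_left intro!: sum.cong sum.swap)
  also have "\<dots> = frob_inner D (R * transpose_mat X)"
    unfolding frob_inner_def using D by (auto simp: RXT intro!: sum.cong)
  finally show ?thesis .
qed

lemma (in vec_space) full_rank_col_space:
  assumes A: "A \<in> carrier_mat n nc" and r: "rank A = n"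
  shows "col_space A = carrier_vec n"
proof -
  have "lin_indpt {}" by (simp add: lin_dep_def)
  then obtain S where S: "finite S" "maximal S (\<lambda>T. T \<subseteq> set (cols A) \<and> lin_indpt T)"
    using maximal_exists_superset[of "set (cols A)" "\<lambda>T. T \<subseteq> set (cols A) \<and> lin_indpt T" "{}"]
    by auto
  have card: "card S = n" using rank_card_indpt[OF A S(2)] r by simp
  have S_cols: "S \<subseteq> set (cols A)" "lin_indpt S" using S(2) unfolding maximal_def by auto
  have cols: "set (cols A) \<subseteq> carrier_vec n" using A cols_dim by blast
  have "basis S" by (rule dim_li_is_basis) (use S S_cols cols card dim_is_n in auto)
  then have "span S = carrier_vec n" unfolding basis_def by simp
  moreover have "span S \<subseteq> span (set (cols A))" using span_is_monotone S_cols by metis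
  moreover have "span (set (cols A)) \<subseteq> carrier_vec n" using cols span_closed by auto
  ultimately show ?thesis unfolding col_space_def by auto
qed

lemma scalar_prod_self_eq_0:
  fixes v :: "real vec"
  assumes v: "v \<in> carrier_vec n" and z: "v \<bullet> v = 0"
  shows "v = 0\<^sub>v n"
proof (rule eq_vecI)
  fix i assume i: "i < dim_vec (0\<^sub>v n :: real vec)"
  have "(\<Sum>k\<in>{0..<n}. v $ k * v $ k) = 0" using z v by (simp add: scalar_prod_def)
  then have "v $ i * v $ i = 0" using i by (subst (asm) sum_nonneg_eq_0_iff) auto
  then show "v $ i = 0\<^sub>v n $ i" using i by simp
qed (use v in auto)

text \<open>A kernel vector \<open>v\<close> of \<open>Xe Xe\<^sup>T\<close> has \<open>\<parallel>Xe\<^sup>T v\<parallel>\<^sup>2 = v \<bullet> Xe Xe\<^sup>T v = 0\<close>; as \<open>v\<close> lies in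
  the column space of \<open>Xe\<close>, say \<open>v = Xe x\<close>, also \<open>v \<bullet> v = Xe\<^sup>T v \<bullet> x = 0\<close>.\<close>

lemma gram_mat_det_nonzero:
  fixes Xe :: "real mat"
  assumes Xe: "Xe \<in> carrier_mat n N" and full_rank: "mrank Xe = n"
  shows "det (Xe * transpose_mat Xe) \<noteq> 0"
proof
  interpret vec_space "TYPE(real)" n .
  have XT: "transpose_mat Xe \<in> carrier_mat N n" using Xe by simp
  assume "det (Xe * transpose_mat Xe) = 0"
  then obtain v where v: "v \<in> carrier_vec n" "v \<noteq> 0\<^sub>v n" "Xe * transpose_mat Xe *\<^sub>v v = 0\<^sub>v n"
    using det_0_iff_vec_prod_zero_field[of "Xe * transpose_mat Xe" n] Xe by auto
  define u where "u = transpose_mat Xe *\<^sub>v v"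
  have u: "u \<in> carrier_vec N" unfolding u_def using XT v by simp
  have "u \<bullet> u = v \<bullet> (Xe *\<^sub>v u)"
    unfolding u_def by (rule transpose_vec_mult_scalar[OF Xe u[unfolded u_def] v(1)])
  also have "\<dots> = 0" using v Xe XT unfolding u_def by simp
  finally have u0: "u = 0\<^sub>v N" using scalar_prod_self_eq_0[OF u] by simp
  have "rank Xe = n" using full_rank Xe unfolding mrank_def by (simp add: carrier_matD)
  then have "v \<in> col_space Xe" using full_rank_col_space[OF Xe] v by simp
  then obtain x where x: "x \<in> carrier_vec N" "Xe *\<^sub>v x = v"
    using col_space_eq[OF Xe] Xe by auto
  have "v \<bullet> v = u \<bullet> x"
    unfolding u_def using transpose_vec_mult_scalar[OF Xe x(1) v(1)] x(2) by simp
  also have "\<dots> = 0" using u0 x by simp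
  finally show False using scalar_prod_self_eq_0[OF v(1)] v(2) by simp
qed

lemma gram_mat_minv:
  fixes Xe :: "real mat"
  assumes Xe: "Xe \<in> carrier_mat n N" and full_rank: "mrank Xe = n"
  shows "Xe * transpose_mat Xe * minv (Xe * transpose_mat Xe) = 1\<^sub>m n"
    and "minv (Xe * transpose_mat Xe) * (Xe * transpose_mat Xe) = 1\<^sub>m n"
    and "minv (Xe * transpose_mat Xe) \<in> carrier_mat n n"
proof -
  define M where "M = Xe * transpose_mat Xe"
  have M: "M \<in> carrier_mat n n" unfolding M_def using Xe by simp
  have "M \<in> Units (ring_mat TYPE(real) n ())"
    using det_non_zero_imp_unit[OF M] gram_mat_det_nonzero[OF Xe full_rank] unfolding M_def by simp
  then obtain B where B: "mat_inverse M = Some B"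
    using mat_inverse(1)[OF M, of "()"] by (cases "mat_inverse M") auto
  then have "M * B = 1\<^sub>m n \<and> B * M = 1\<^sub>m n \<and> B \<in> carrier_mat n n"
    by (rule mat_inverse(2)[OF M])
  moreover have "minv M = B" unfolding minv_def B by simp
  ultimately show "Xe * transpose_mat Xe * minv (Xe * transpose_mat Xe) = 1\<^sub>m n"
    and "minv (Xe * transpose_mat Xe) * (Xe * transpose_mat Xe) = 1\<^sub>m n"
    and "minv (Xe * transpose_mat Xe) \<in> carrier_mat n n"
    unfolding M_def by auto
qed

definition lsq_solution :: "real mat \<Rightarrow> real mat \<Rightarrow> real mat" where
  "lsq_solution Xe C = C * transpose_mat Xe * minv (Xe * transpose_mat Xe)"

context
  fixes Xe :: "real mat" and n N :: nat
  assumes Xe: "Xe \<in> carrier_mat n N" and full_rank: "mrank Xe = n"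
begin

lemma lsq_solution_carrier: "C \<in> carrier_mat r N \<Longrightarrow> lsq_solution Xe C \<in> carrier_mat r n"
  unfolding lsq_solution_def using Xe gram_mat_minv(3)[OF Xe full_rank] by simp

lemma lsq_solution_mult_left:
  assumes P: "P \<in> carrier_mat r m" and C: "C \<in> carrier_mat m N"
  shows "P * lsq_solution Xe C = lsq_solution Xe (P * C)"
proof -
  have XT: "transpose_mat Xe \<in> carrier_mat N n" using Xe by simp
  note Mi = gram_mat_minv(3)[OF Xe full_rank]
  have "P * lsq_solution Xe C = P * (C * transpose_mat Xe) * minv (Xe * transpose_mat Xe)"
    unfolding lsq_solution_def using P C XT Mi by (intro assoc_mult_mat[symmetric]) auto
  also have "P * (C * transpose_mat Xe) = P * C * transpose_mat Xe"
    using P C XT by (intro assoc_mult_mat[symmetric]) auto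
  finally show ?thesis unfolding lsq_solution_def .
qed

lemma lsq_normal_equation:
  assumes C: "C \<in> carrier_mat r N"
  shows "(lsq_solution Xe C * Xe - C) * transpose_mat Xe = 0\<^sub>m r n"
proof -
  have XT: "transpose_mat Xe \<in> carrier_mat N n" using Xe by simp
  note Mi = gram_mat_minv(3)[OF Xe full_rank]
  have CXT: "C * transpose_mat Xe \<in> carrier_mat r n" using C XT by simp
  have W: "lsq_solution Xe C \<in> carrier_mat r n" using lsq_solution_carrier[OF C] .
  have "lsq_solution Xe C * Xe * transpose_mat Xe = lsq_solution Xe C * (Xe * transpose_mat Xe)"
    using W Xe XT by (rule assoc_mult_mat)
  also have "\<dots> = C * transpose_mat Xe * (minv (Xe * transpose_mat Xe) * (Xe * transpose_mat Xe))"
    unfolding lsq_solution_def by (rule assoc_mult_mat[OF CXT Mi, of _ n]) (use Xe XT in simp)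
  also have "\<dots> = C * transpose_mat Xe"
    unfolding gram_mat_minv(2)[OF Xe full_rank] using CXT by (rule right_mult_one_mat)
  finally have "lsq_solution Xe C * Xe * transpose_mat Xe = C * transpose_mat Xe" .
  moreover have "(lsq_solution Xe C * Xe - C) * transpose_mat Xe
      = lsq_solution Xe C * Xe * transpose_mat Xe - C * transpose_mat Xe"
    using W Xe C XT by (intro minus_mult_distrib_mat) auto
  ultimately show ?thesis using CXT by simp
qed

text \<open>The residual of the least-squares solution is orthogonal to every \<open>D Xe\<close>.\<close>

lemma lsq_pythagoras:
  assumes C: "C \<in> carrier_mat r N" and W: "W \<in> carrier_mat r n"
  shows "frob_sq (W * Xe - C)
    = frob_sq ((W - lsq_solution Xe C) * Xe) + frob_sq (lsq_solution Xe C * Xe - C)"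
proof -
  define Wo where "Wo = lsq_solution Xe C"
  have Wo: "Wo \<in> carrier_mat r n" unfolding Wo_def using lsq_solution_carrier[OF C] .
  have D: "W - Wo \<in> carrier_mat r n" using Wo by (rule minus_carrier_mat)
  have R: "Wo * Xe - C \<in> carrier_mat r N" using C by (rule minus_carrier_mat)
  have "W * Xe - C = (W - Wo) * Xe + (Wo * Xe - C)"
    using W Wo Xe C by (intro eq_matI) (auto simp: minus_mult_distrib_mat)
  moreover have "frob_inner ((W - Wo) * Xe) (Wo * Xe - C) = 0"
  proof -
    have "frob_inner ((W - Wo) * Xe) (Wo * Xe - C) = frob_inner (W - Wo) ((Wo * Xe - C) * transpose_mat Xe)"
      by (rule frob_inner_mult_left[OF D Xe R])
    also have "\<dots> = frob_inner (W - Wo) (0\<^sub>m r n)"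
      unfolding Wo_def lsq_normal_equation[OF C] ..
    also have "\<dots> = 0" using Wo by (auto simp: frob_inner_def intro!: sum.neutral)
    finally show ?thesis .
  qed
  ultimately show ?thesis
    unfolding Wo_def[symmetric] using frob_sq_add[of "(W - Wo) * Xe" r N "Wo * Xe - C"] D Xe R by simp
qed

lemma lsq_minimal:
  assumes "C \<in> carrier_mat r N" and "W \<in> carrier_mat r n"
  shows "frob_sq (lsq_solution Xe C * Xe - C) \<le> frob_sq (W * Xe - C)"
  using lsq_pythagoras[OF assms] frob_sq_nonneg by simp

lemma lsq_unique:
  assumes C: "C \<in> carrier_mat r N" and W: "W \<in> carrier_mat r n"
    and le: "frob_sq (W * Xe - C) \<le> frob_sq (lsq_solution Xe C * Xe - C)"
  shows "W = lsq_solution Xe C"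
proof -
  define Wo where "Wo = lsq_solution Xe C"
  have Wo: "Wo \<in> carrier_mat r n" unfolding Wo_def using lsq_solution_carrier[OF C] .
  have D: "W - Wo \<in> carrier_mat r n" using Wo by (rule minus_carrier_mat)
  have XT: "transpose_mat Xe \<in> carrier_mat N n" using Xe by simp
  note Mi = gram_mat_minv(3)[OF Xe full_rank]
  have "frob_sq ((W - Wo) * Xe) = 0"
    using lsq_pythagoras[OF C W] le frob_sq_nonneg[of "(W - Wo) * Xe"] unfolding Wo_def by simp
  then have DX: "(W - Wo) * Xe = 0\<^sub>m r N" using frob_sq_eq_0_iff[of _ r N] D Xe by simp
  have "W - Wo = (W - Wo) * (Xe * transpose_mat Xe * minv (Xe * transpose_mat Xe))"
    unfolding gram_mat_minv(1)[OF Xe full_rank] using D by (rule right_mult_one_mat[symmetric])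
  also have "\<dots> = (W - Wo) * (Xe * transpose_mat Xe) * minv (Xe * transpose_mat Xe)"
    using D Xe XT Mi by (intro assoc_mult_mat[symmetric]) auto
  also have "(W - Wo) * (Xe * transpose_mat Xe) = (W - Wo) * Xe * transpose_mat Xe"
    using D Xe XT by (intro assoc_mult_mat[symmetric]) auto
  also have "\<dots> = 0\<^sub>m r n" unfolding DX using XT by simp
  also have "0\<^sub>m r n * minv (Xe * transpose_mat Xe) = 0\<^sub>m r n" using Mi by simp
  finally have diff: "W - Wo = 0\<^sub>m r n" .
  show ?thesis unfolding Wo_def[symmetric]
  proof (rule eq_matI)
    fix i j assume ij: "i < dim_row Wo" "j < dim_col Wo"
    then have "(W - Wo) $$ (i, j) = 0" using diff Wo by simp
    then show "W $$ (i, j) = Wo $$ (i, j)" using ij W Wo by simp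
  qed (use W Wo in auto)
qed

end

lemma prod_net_carrier:
  assumes sh: "net_shape ds Ws" and k: "k \<le> length Ws"
  shows "prod_net (ds ! 0) Ws k \<in> carrier_mat (ds ! k) (ds ! 0)"
  using k
proof (induction k)
  case (Suc k)
  have "Ws ! k \<in> carrier_mat (ds ! Suc k) (ds ! k)"
    using sh Suc.prems unfolding net_shape_def by auto
  with Suc show ?case by simp
qed simp

lemma net_shape_update_first:
  assumes sh: "net_shape ds Ws" and G: "G \<in> carrier_mat (ds ! 0) (ds ! 0)"
  shows "net_shape ds (Ws[0 := Ws ! 0 * G])"
  unfolding net_shape_def
proof (intro conjI allI impI)
  show "length ds = length (Ws[0 := Ws ! 0 * G]) + 1" using sh unfolding net_shape_def by simp
  fix i assume i: "i < length (Ws[0 := Ws ! 0 * G])"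
  then have Wi: "Ws ! i \<in> carrier_mat (ds ! Suc i) (ds ! i)" using sh unfolding net_shape_def by auto
  show "Ws[0 := Ws ! 0 * G] ! i \<in> carrier_mat (ds ! Suc i) (ds ! i)"
    using Wi G i by (cases "i = 0") auto
qed

lemma prod_net_update_first:
  assumes sh: "net_shape ds Ws" and G: "G \<in> carrier_mat (ds ! 0) (ds ! 0)"
    and k: "1 \<le> k" "k \<le> length Ws"
  shows "prod_net (ds ! 0) (Ws[0 := Ws ! 0 * G]) k = prod_net (ds ! 0) Ws k * G"
  using k
proof (induction k)
  case (Suc k)
  have Wk: "Ws ! k \<in> carrier_mat (ds ! Suc k) (ds ! k)" using sh Suc.prems unfolding net_shape_def by auto
  show ?case
  proof (cases "k = 0")
    case True
    with Wk G Suc.prems show ?thesis by (simp add: Suc_le_eq)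
  next
    case False
    have P: "prod_net (ds ! 0) Ws k \<in> carrier_mat (ds ! k) (ds ! 0)"
      using prod_net_carrier[OF sh] Suc.prems by simp
    have "prod_net (ds ! 0) (Ws[0 := Ws ! 0 * G]) (Suc k) = Ws ! k * (prod_net (ds ! 0) Ws k * G)"
      using False Suc by simp
    also have "\<dots> = Ws ! k * prod_net (ds ! 0) Ws k * G"
      by (rule assoc_mult_mat[OF Wk P G, symmetric])
    finally show ?thesis by simp
  qed
qed simp

lemma prod_net_refit_teacher:
  assumes sh: "net_shape ds Wt" and X: "X \<in> carrier_mat (ds ! 0) N"
    and Xe: "Xe \<in> carrier_mat (ds ! 0) N" and full_rank: "mrank Xe = ds ! 0"
    and k: "1 \<le> k" "k \<le> length Wt"
  shows "prod_net (ds ! 0) (Wt[0 := Wt ! 0 * lsq_solution Xe X]) k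
    = lsq_solution Xe (prod_net (ds ! 0) Wt k * X)"
proof -
  have G: "lsq_solution Xe X \<in> carrier_mat (ds ! 0) (ds ! 0)"
    using lsq_solution_carrier[OF Xe full_rank X] .
  have P: "prod_net (ds ! 0) Wt k \<in> carrier_mat (ds ! k) (ds ! 0)"
    using prod_net_carrier[OF sh k(2)] .
  show ?thesis
    using prod_net_update_first[OF sh G k] lsq_solution_mult_left[OF Xe full_rank P X] by simp
qed

theorem theorem2:
  fixes ds :: "nat list" and N :: nat
    and X E Y :: "real mat" and Wt Wb Ws :: "real mat list"
    and istar :: nat and lam :: real
  defines "L \<equiv> length ds - 1"
  defines "Xe \<equiv> X + E"
  defines "Wopt \<equiv> Y * transpose_mat Xe * minv (Xe * transpose_mat Xe)"
  assumes L2: "L \<ge> 2"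
    and X_dim: "X \<in> carrier_mat (ds ! 0) N"
    and E_dim: "E \<in> carrier_mat (ds ! 0) N"
    and Y_dim: "Y \<in> carrier_mat (ds ! L) N"
    and N_ge: "N \<ge> ds ! 0"
    and rank_Xe: "mrank Xe = ds ! 0"
    and p_ge: "Min (set ds) \<ge> mrank Wopt"
    and istar: "1 \<le> istar" "istar \<le> L"
    and lam: "lam > 0"
    and Wt_shape: "net_shape ds Wt"
    and teacher: "prod_net (ds ! 0) Wt L * X = Y"
    and Wb_shape: "net_shape ds Wb"
    and Wb_min: "\<forall>V. net_shape ds V \<longrightarrow> loss_base Xe Y Wb \<le> loss_base Xe Y V"
    and Ws_shape: "net_shape ds Ws"
    and Ws_min: "\<forall>V. net_shape ds V \<longrightarrow> loss_st X Xe Y Wt istar lam Ws \<le> loss_st X Xe Y Wt istar lam V"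
  shows "prod_net (ds ! 0) Wb L = Wopt \<and> prod_net (ds ! 0) Ws L = Wopt"
proof -
  have Xe: "Xe \<in> carrier_mat (ds ! 0) N" unfolding Xe_def using X_dim E_dim by simp
  have rows: "dim_row Xe = ds ! 0" "dim_row X = ds ! 0" using Xe X_dim by auto
  have len: "length Wt = L" "length Wb = L" "length Ws = L"
    using Wt_shape Wb_shape Ws_shape unfolding net_shape_def L_def by auto
  have out: "prod_net (ds ! 0) V L \<in> carrier_mat (ds ! L) (ds ! 0)" if "net_shape ds V" for V
    using prod_net_carrier[OF that] that unfolding net_shape_def L_def by simp
  have Wopt: "Wopt = lsq_solution Xe Y" unfolding Wopt_def lsq_solution_def ..
  define C where "C = prod_net (ds ! 0) Wt istar * X"
  have C: "C \<in> carrier_mat (ds ! istar) N"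
    unfolding C_def using prod_net_carrier[OF Wt_shape, of istar] istar len X_dim by simp
  define V where "V = Wt[0 := Wt ! 0 * lsq_solution Xe X]"
  have V: "net_shape ds V"
    unfolding V_def by (rule net_shape_update_first[OF Wt_shape lsq_solution_carrier[OF Xe rank_Xe X_dim]])
  have lenV: "length V = L" unfolding V_def using len by simp
  have V_out: "prod_net (ds ! 0) V L = Wopt"
    using prod_net_refit_teacher[OF Wt_shape X_dim Xe rank_Xe, of L] L2 len teacher
    unfolding V_def Wopt by simp
  have V_istar: "prod_net (ds ! 0) V istar = lsq_solution Xe C"
    using prod_net_refit_teacher[OF Wt_shape X_dim Xe rank_Xe, of istar] istar len
    unfolding V_def C_def by simp
  have "loss_base Xe Y Wb \<le> loss_base Xe Y V" using Wb_min V by blast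
  then have base: "prod_net (ds ! 0) Wb L = Wopt"
    using lsq_unique[OF Xe rank_Xe Y_dim out[OF Wb_shape]]
    unfolding loss_base_def rows len lenV V_out Wopt by simp
  have "loss_st X Xe Y Wt istar lam Ws \<le> loss_st X Xe Y Wt istar lam V" using Ws_min V by blast
  moreover have "lam * frob_sq (lsq_solution Xe C * Xe - C) \<le> lam * frob_sq (prod_net (ds ! 0) Ws istar * Xe - C)"
    using lsq_minimal[OF Xe rank_Xe C] prod_net_carrier[OF Ws_shape, of istar] istar len lam by simp
  ultimately have "frob_sq (prod_net (ds ! 0) Ws L * Xe - Y) \<le> frob_sq (Wopt * Xe - Y)"
    unfolding loss_st_def rows len lenV V_out V_istar C_def[symmetric] by linarith
  then have "prod_net (ds ! 0) Ws L = Wopt"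
    using lsq_unique[OF Xe rank_Xe Y_dim out[OF Ws_shape]] unfolding Wopt by simp
  with base show ?thesis by blast
qed

end
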